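(* Let $q(m,n)=am^2+bmn+cn^2$ with $a,b,c\in\mathbb{Z}$ be a binary quadratic form whose discriminant $\Delta(q)=b^2-4ac$ is a perfect square (including $0$, and including the zero form). Then for every $0<\lambda\le 1$ there exists a nonnegative $f\in\ell^1(\mathbb{Z})$ with $\|\mathcal{I}_\lambda f\|_{\ell^1(\mathbb{Z})}=\infty$, where $\mathcal{I}_{\lambda}f(n)=\sum_{m\in\mathbb{Z}\setminus\{0\}}\frac{f(q(m,n))}{|m|^{\lambda}}$.
   Context: Sums of nonnegative terms are allowed to equal $+\infty$. *)

theory Defs
  imports "HOL-Analysis.Analysis"
begin

definition qform :: "int \<Rightarrow> int \<Rightarrow> int \<Rightarrow> int \<Rightarrow> int \<Rightarrow> int" where
  "qform a b c m n = a * m^2 + b * m * n + c * n^2"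

definition Iop :: "int \<Rightarrow> int \<Rightarrow> int \<Rightarrow> real \<Rightarrow> (int \<Rightarrow> real) \<Rightarrow> int \<Rightarrow> ennreal" where
  "Iop a b c lam f n = (\<Sum>\<^sub>\<infinity>m\<in>UNIV - {0}. ennreal (f (qform a b c m n) / \<bar>real_of_int m\<bar> powr lam))"

end

theory Submission
  imports Defs
begin

text \<open>Since the discriminant is a square, q factors into rational linear forms, so either q
  vanishes along a whole line t(m0, n0) with m0 \<noteq> 0, or q = a m^2.  In the first case let f be
  the point mass at 0: the values I f(t n0), or the single value I f(0) when n0 = 0, dominate the
  series of |t m0|^(-lam) over t \<noteq> 0, which diverges for lam \<le> 1.  In the second case let f be
  the point mass at a: then I f(n) \<ge> 1 for every n.\<close>

text \<open>The library fact \<open>summable_on_ennreal\<close> ends up stated for \<open>ennreal_of_enat \<circ> f\<close> only.\<close>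

lemma summable_on_ennreal_valued [simp]: "(g :: 'a \<Rightarrow> ennreal) summable_on S"
  by (rule nonneg_summable_on_complete) simp

lemma le_infsum_ennreal:
  fixes g :: "'a \<Rightarrow> ennreal"
  assumes "x \<in> S"
  shows "g x \<le> infsum g S"
proof -
  have "infsum g {x} \<le> infsum g S"
    by (rule infsum_mono_neutral) (use assms in auto)
  then show ?thesis by simp
qed

lemma infsum_ennreal_eq_top_if_not_summable:
  fixes g :: "nat \<Rightarrow> real"
  assumes "\<And>n. 0 \<le> g n" and "\<not> summable g"
  shows "(\<Sum>\<^sub>\<infinity>n. ennreal (g n)) = \<infinity>"
proof -
  have "(\<lambda>n. ennreal (g n)) sums (\<Sum>\<^sub>\<infinity>n. ennreal (g n))"
    by (rule has_sum_imp_sums) (simp add: has_sum_infsum)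
  then have "(\<Sum>\<^sub>\<infinity>n. ennreal (g n)) = (\<Sum>n. ennreal (g n))"
    by (simp add: sums_iff)
  with assms show ?thesis
    using summable_suminf_not_top by (metis infinity_ennreal_def)
qed

lemma infsum_inverse_powr_multiples_eq_top:
  fixes C :: int and lam :: real
  assumes "C \<noteq> 0" and "lam \<le> 1"
  shows "(\<Sum>\<^sub>\<infinity>t\<in>UNIV - {0::int}. ennreal (1 / \<bar>real_of_int (t * C)\<bar> powr lam)) = \<infinity>"
proof -
  define G where "G t = ennreal (1 / \<bar>real_of_int (t * C)\<bar> powr lam)" for t
  define g where "g n = \<bar>real_of_int C\<bar> powr -lam * real (Suc n) powr -lam" for n
  have G_g: "G (int (Suc n)) = ennreal (g n)" for n
    by (simp add: G_def g_def abs_mult powr_mult powr_minus divide_inverse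
        del: of_nat_Suc)
  have "\<not> summable (\<lambda>n. real n powr -lam)"
    using assms(2) by (simp add: summable_real_powr_iff)
  then have "\<not> summable (\<lambda>n. real (Suc n) powr -lam)"
    by (subst summable_Suc_iff)
  then have "\<not> summable g"
    using assms(1) unfolding g_def by (simp del: of_nat_Suc)
  then have "(\<Sum>\<^sub>\<infinity>n. G (int (Suc n))) = \<infinity>"
    unfolding G_g by (rule infsum_ennreal_eq_top_if_not_summable[rotated]) (simp add: g_def)
  then have "\<infinity> = (\<Sum>\<^sub>\<infinity>n. G (int (Suc n)))"
    by (rule sym)
  also have "\<dots> = infsum G (range (\<lambda>n. int (Suc n)))"
    by (rule infsum_reindex[symmetric, unfolded comp_def]) (simp add: inj_on_def)
  also have "\<dots> \<le> infsum G (UNIV - {0})"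
    by (rule infsum_mono_neutral) auto
  finally show ?thesis
    by (simp add: G_def[abs_def] top_unique)
qed

lemma summable_on_indicator_singleton: "(indicator {v} :: 'a \<Rightarrow> real) summable_on UNIV"
proof -
  have "(indicator {v} :: 'a \<Rightarrow> real) summable_on {v}" by simp
  moreover have "(indicator {v} :: 'a \<Rightarrow> real) summable_on UNIV \<longleftrightarrow> (indicator {v} :: 'a \<Rightarrow> real) summable_on {v}"
    by (rule summable_on_cong_neutral) (auto simp: indicator_def)
  ultimately show ?thesis by simp
qed

lemma qform_scale: "qform a b c (t * m) (t * n) = t\<^sup>2 * qform a b c m n"
  by (simp add: qform_def algebra_simps power2_eq_square)

lemma qform_isotropic_vector:
  assumes "b\<^sup>2 - 4 * a * c = k\<^sup>2" and "b \<noteq> 0 \<or> c \<noteq> 0"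
  obtains m n where "m \<noteq> 0" and "qform a b c m n = 0"
proof (cases "a = 0")
  case True
  then show ?thesis
    using that[of 1 0] by (simp add: qform_def)
next
  case False
  \<comment> \<open>\<open>(k - b, 2a)\<close> is a zero by the quadratic formula; the sign of k can be chosen so that \<open>k \<noteq> b\<close>
    unless \<open>b = k = 0\<close>, which would force \<open>c = 0\<close>.\<close>
  obtain k' where k': "b\<^sup>2 - 4 * a * c = k'\<^sup>2" "k' \<noteq> b"
  proof (cases "k = b")
    case True
    with assms False have "b \<noteq> 0" by auto
    with True assms(1) that[of "-k"] show ?thesis by simp
  next
    case False
    with assms(1) that show ?thesis by blast
  qed
  have "qform a b c (k' - b) (2 * a) = a * (k'\<^sup>2 - (b\<^sup>2 - 4 * a * c))"
    by (simp add: qform_def algebra_simps power2_eq_square)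
  with k' that[of "k' - b" "2 * a"] show ?thesis by simp
qed

lemma Iop_ge_term:
  assumes "m \<noteq> 0"
  shows "ennreal (f (qform a b c m n) / \<bar>real_of_int m\<bar> powr lam) \<le> Iop a b c lam f n"
  unfolding Iop_def by (rule le_infsum_ennreal) (use assms in simp)

lemma infsum_Iop_eq_top_of_isotropic:
  assumes "m0 \<noteq> 0" and "qform a b c m0 n0 = 0" and "lam \<le> 1"
  shows "(\<Sum>\<^sub>\<infinity>n. Iop a b c lam (indicator {0}) n) = \<infinity>"
proof -
  define F where "F = Iop a b c lam (indicator {0})"
  have term_ge: "ennreal (1 / \<bar>real_of_int (t * m0)\<bar> powr lam) \<le> F (t * n0)" if "t \<noteq> 0" for t
    using Iop_ge_term[of "t * m0" "indicator {0}" a b c "t * n0" lam] that assms(1,2)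
    by (simp add: F_def qform_scale)
  have "\<infinity> = (\<Sum>\<^sub>\<infinity>t\<in>UNIV - {0::int}. ennreal (1 / \<bar>real_of_int (t * m0)\<bar> powr lam))"
    using infsum_inverse_powr_multiples_eq_top[OF assms(1,3)] by simp
  also have "\<dots> \<le> infsum F UNIV"
  proof (cases "n0 = 0")
    case True
    \<comment> \<open>here the whole divergent series is part of the single value \<open>F 0\<close>\<close>
    have "(\<Sum>\<^sub>\<infinity>t\<in>UNIV - {0::int}. ennreal (1 / \<bar>real_of_int (t * m0)\<bar> powr lam))
        \<le> (\<Sum>\<^sub>\<infinity>t\<in>UNIV - {0::int}. ennreal (indicator {0} (qform a b c (t * m0) 0)
              / \<bar>real_of_int (t * m0)\<bar> powr lam))"
      using qform_scale[of a b c _ m0 0] assms(2) True by simp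
    also have "\<dots> = (\<Sum>\<^sub>\<infinity>m\<in>(\<lambda>t. t * m0) ` (UNIV - {0}).
                      ennreal (indicator {0} (qform a b c m 0) / \<bar>real_of_int m\<bar> powr lam))"
      by (rule infsum_reindex[symmetric, unfolded comp_def]) (use assms(1) in \<open>auto simp: inj_on_def\<close>)
    also have "\<dots> \<le> F 0"
      unfolding F_def Iop_def by (rule infsum_mono_neutral) (use assms(1) in auto)
    also have "\<dots> \<le> infsum F UNIV"
      by (rule le_infsum_ennreal) simp
    finally show ?thesis .
  next
    case False
    have "(\<Sum>\<^sub>\<infinity>t\<in>UNIV - {0::int}. ennreal (1 / \<bar>real_of_int (t * m0)\<bar> powr lam))
        \<le> (\<Sum>\<^sub>\<infinity>t\<in>UNIV - {0::int}. F (t * n0))"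
      by (intro infsum_mono term_ge) auto
    also have "\<dots> = infsum F ((\<lambda>t. t * n0) ` (UNIV - {0}))"
      by (rule infsum_reindex[symmetric, unfolded comp_def]) (use False in \<open>auto simp: inj_on_def\<close>)
    also have "\<dots> \<le> infsum F UNIV"
      by (rule infsum_mono_neutral) auto
    finally show ?thesis .
  qed
  finally show ?thesis
    by (simp add: F_def top_unique)
qed

lemma infsum_Iop_eq_top_of_square: "(\<Sum>\<^sub>\<infinity>n. Iop a 0 0 lam (indicator {a}) n) = \<infinity>"
proof (rule infsum_superconst_infinite_ennreal[where b = 1])
  fix n :: int
  show "1 \<le> Iop a 0 0 lam (indicator {a}) n"
    using Iop_ge_term[of 1 "indicator {a}" a 0 0 n lam] by (simp add: qform_def)
qed auto

theorem mainTheorem5: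
  fixes a b c :: int and lam :: real
  assumes disc_square: "\<exists>k::int. b^2 - 4*a*c = k^2"
    and lam: "0 < lam" "lam \<le> 1"
  shows "\<exists>f :: int \<Rightarrow> real. (\<forall>n. 0 \<le> f n) \<and> f summable_on UNIV \<and>
           (\<Sum>\<^sub>\<infinity>n\<in>UNIV. Iop a b c lam f n) = \<infinity>"
proof (cases "b = 0 \<and> c = 0")
  case True
  then have "(\<Sum>\<^sub>\<infinity>n. Iop a b c lam (indicator {a}) n) = \<infinity>"
    using infsum_Iop_eq_top_of_square by simp
  then show ?thesis
    by (intro exI[of _ "indicator {a}"]) (simp add: summable_on_indicator_singleton)
next
  case False
  then obtain m0 n0 where "m0 \<noteq> 0" "qform a b c m0 n0 = 0"
    using disc_square qform_isotropic_vector by metis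
  then have "(\<Sum>\<^sub>\<infinity>n. Iop a b c lam (indicator {0}) n) = \<infinity>"
    using infsum_Iop_eq_top_of_isotropic lam(2) by blast
  then show ?thesis
    by (intro exI[of _ "indicator {0}"]) (simp add: summable_on_indicator_singleton)
qed

end
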